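(* Let $(G,\sigma)$ be an RBMG explained by the leaf-colored tree $(T,\sigma)$. If $(T,\sigma)$ is least resolved w.r.t. $(G,\sigma)$, then every inner edge $e=uv\in E(T)$ (with $v$ a child of $u$) satisfies $\sigma(L(T(v)))\cap\sigma(L(T(u))\setminus L(T(v)))\ne\emptyset$.
   Context: A planted phylogenetic tree $T$ is a rooted tree with distinguished root $0_T$ of degree $1$, all other non-leaf vertices of degree $\ge3$; $L(T)$ its leaves (excluding $0_T$), $|L(T)|\ge2$, $V^0(T)$ its inner vertices; an inner edge is an edge with both endpoints in $V^0(T)$. $\preceq_T$ is the ancestor order towards $0_T$; $T(v)$, $\mathrm{child}(v)$, $\mathrm{lca}_T$ as usual. $\sigma$ maps $L(T)$ to a set of colors. A leaf $y$ is a best match of leaf $x$ if $\sigma(x)\ne\sigma(y)$ and $\mathrm{lca}_T(x,y)\preceq_T\mathrm{lca}_T(x,y')$ for all leaves $y'$ with $\sigma(y')=\sigma(y)$; the RBMG $G(T,\sigma)$ is the undirected vertex-colored graph on $L(T)$ whose edges are the reciprocal best match pairs. $(T,\sigma)$ explains $(G,\sigma)$ if $G(T,\sigma)=(G,\sigma)$. $(T,\sigma)$ is least resolved if for every inner edge $e$, the tree $T_e$ obtained by contracting $e$ satisfies $G(T_e,\sigma)\ne G(T,\sigma)$. *)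

theory Defs
  imports Main
begin

text \<open>A rooted tree is represented by a finite vertex set V, a parent map par and
  a root r (the planted root 0_T), with the convention par r = r.\<close>

definition children :: "'v set \<Rightarrow> ('v \<Rightarrow> 'v) \<Rightarrow> 'v \<Rightarrow> 'v \<Rightarrow> 'v set" where
  "children V par r x = {w \<in> V. w \<noteq> r \<and> par w = x}"

definition leaves :: "'v set \<Rightarrow> ('v \<Rightarrow> 'v) \<Rightarrow> 'v \<Rightarrow> 'v set" where
  "leaves V par r = {x \<in> V. x \<noteq> r \<and> children V par r x = {}}"

definition inner_vertices :: "'v set \<Rightarrow> ('v \<Rightarrow> 'v) \<Rightarrow> 'v \<Rightarrow> 'v set" where
  "inner_vertices V par r = V - leaves V par r - {r}"

definition planted_phylo :: "'v set \<Rightarrow> ('v \<Rightarrow> 'v) \<Rightarrow> 'v \<Rightarrow> bool" where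
  "planted_phylo V par r \<longleftrightarrow>
     finite V \<and> r \<in> V \<and> par r = r \<and>
     (\<forall>x \<in> V - {r}. par x \<in> V) \<and>
     (\<forall>x \<in> V. \<exists>n. (par ^^ n) x = r) \<and>
     card (children V par r r) = 1 \<and>
     (\<forall>x \<in> V - {r}. children V par r x \<noteq> {} \<longrightarrow> card (children V par r x) \<ge> 2) \<and>
     card (leaves V par r) \<ge> 2"

definition anc_le :: "('v \<Rightarrow> 'v) \<Rightarrow> 'v \<Rightarrow> 'v \<Rightarrow> bool" where
  "anc_le par x y \<longleftrightarrow> (\<exists>n. (par ^^ n) x = y)"

definition lca :: "'v set \<Rightarrow> ('v \<Rightarrow> 'v) \<Rightarrow> 'v \<Rightarrow> 'v \<Rightarrow> 'v" where
  "lca V par x y = (THE z. z \<in> V \<and> anc_le par x z \<and> anc_le par y z \<and>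
      (\<forall>w \<in> V. anc_le par x w \<and> anc_le par y w \<longrightarrow> anc_le par z w))"

definition subtree_leaves :: "'v set \<Rightarrow> ('v \<Rightarrow> 'v) \<Rightarrow> 'v \<Rightarrow> 'v \<Rightarrow> 'v set" where
  "subtree_leaves V par r v = {x \<in> leaves V par r. anc_le par x v}"

definition best_match :: "'v set \<Rightarrow> ('v \<Rightarrow> 'v) \<Rightarrow> 'v \<Rightarrow> ('v \<Rightarrow> 'c) \<Rightarrow> 'v \<Rightarrow> 'v \<Rightarrow> bool" where
  "best_match V par r \<sigma> x y \<longleftrightarrow>
     x \<in> leaves V par r \<and> y \<in> leaves V par r \<and> \<sigma> x \<noteq> \<sigma> y \<and>
     (\<forall>y' \<in> leaves V par r. \<sigma> y' = \<sigma> y \<longrightarrow>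
        anc_le par (lca V par x y) (lca V par x y'))"

text \<open>Edge set of the RBMG G(T,\<sigma>); its vertex set is the leaf set of T.\<close>
definition rbmg :: "'v set \<Rightarrow> ('v \<Rightarrow> 'v) \<Rightarrow> 'v \<Rightarrow> ('v \<Rightarrow> 'c) \<Rightarrow> 'v set set" where
  "rbmg V par r \<sigma> = {{x, y} | x y. best_match V par r \<sigma> x y \<and> best_match V par r \<sigma> y x}"

text \<open>Contraction of the edge (par v, v): v is removed, its children are attached to par v.\<close>
definition contract_vertices :: "'v set \<Rightarrow> 'v \<Rightarrow> 'v set" where
  "contract_vertices V v = V - {v}"

definition contract_par :: "('v \<Rightarrow> 'v) \<Rightarrow> 'v \<Rightarrow> 'v \<Rightarrow> 'v" where
  "contract_par par v = (\<lambda>w. if par w = v then par v else par w)"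

definition inner_edge :: "'v set \<Rightarrow> ('v \<Rightarrow> 'v) \<Rightarrow> 'v \<Rightarrow> 'v \<Rightarrow> 'v \<Rightarrow> bool" where
  "inner_edge V par r u v \<longleftrightarrow> v \<in> V \<and> v \<noteq> r \<and> par v = u \<and>
     u \<in> inner_vertices V par r \<and> v \<in> inner_vertices V par r"

definition least_resolved :: "'v set \<Rightarrow> ('v \<Rightarrow> 'v) \<Rightarrow> 'v \<Rightarrow> ('v \<Rightarrow> 'c) \<Rightarrow> bool" where
  "least_resolved V par r \<sigma> \<longleftrightarrow>
     (\<forall>u v. inner_edge V par r u v \<longrightarrow>
        rbmg (contract_vertices V v) (contract_par par v) r \<sigma> \<noteq> rbmg V par r \<sigma>)"

end

theory Submission
  imports Defs
begin

text \<open>Contracting an inner edge (u, v) keeps the leaves, and the only lca of two leaves that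
  changes is v, which becomes u. So the ancestor comparison of two lcas lca x y, lca x y' is
  preserved, except in the single case lca x y = u, lca x y' = v: there lca x y is not below
  lca x y' in T, but both become u in T_e. In that case y' lies below v and y lies below u
  but not below v. If no colour occurs on both sides of the edge, y and y' have different colours, so best matches
  never compare them; then G(T_e, \<sigma>) = G(T, \<sigma>), contradicting least resolvedness.\<close>

lemma funpow_fixed: "f x = x \<Longrightarrow> (f ^^ n) x = x"
  by (induction n) auto

lemma anc_le_refl [simp]: "anc_le p x x"
  unfolding anc_le_def by (rule exI[of _ 0]) simp

lemma anc_le_trans: "anc_le p x y \<Longrightarrow> anc_le p y z \<Longrightarrow> anc_le p x z"
  unfolding anc_le_def by (metis funpow_add comp_apply)

lemma anc_le_parent: "anc_le p x (p x)"
  unfolding anc_le_def by (rule exI[of _ 1]) simp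

lemma anc_le_cases: "anc_le p x y \<Longrightarrow> y = x \<or> anc_le p (p x) y"
  unfolding anc_le_def by (metis funpow_0 funpow_Suc_right comp_apply not0_implies_Suc)

lemma anc_le_total:
  assumes "anc_le p x a" and "anc_le p x b"
  shows "anc_le p a b \<or> anc_le p b a"
proof -
  obtain i j where i: "(p ^^ i) x = a" and j: "(p ^^ j) x = b"
    using assms unfolding anc_le_def by blast
  have "(p ^^ (k - l)) ((p ^^ l) x) = (p ^^ k) x" if "l \<le> k" for k l
    using that by (metis funpow_add comp_apply le_add_diff_inverse2)
  then show ?thesis
    unfolding anc_le_def using i j nat_le_linear by metis
qed

lemma anc_le_antisym:
  assumes root: "p r = r" "anc_le p a r" and "anc_le p a b" "anc_le p b a"
  shows "a = b"
proof -
  obtain n where n: "(p ^^ n) a = r" using root(2) unfolding anc_le_def by blast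
  obtain i j where i: "(p ^^ i) a = b" and j: "(p ^^ j) b = a"
    using assms(3,4) unfolding anc_le_def by blast
  have cycle: "(p ^^ (j + i)) a = a" using i j by (simp add: funpow_add)
  show ?thesis
  proof (cases "j + i = 0")
    case True
    then show ?thesis using i by simp
  next
    case False
    \<comment> \<open>running n times around the cycle through a passes the fixed point r\<close>
    have "(p ^^ (n * (j + i))) a = a"
      using funpow_mod_eq[OF cycle, of "n * (j + i)"] by simp
    moreover have "n * (j + i) = (n * (j + i) - n) + n"
      using False by (cases "j + i") auto
    then have "(p ^^ (n * (j + i))) a = (p ^^ (n * (j + i) - n)) r"
      using n by (metis funpow_add comp_apply)
    ultimately have "a = r" using funpow_fixed[of p r] root(1) by simp
    then show ?thesis using i funpow_fixed[of p r] root(1) by simp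
  qed
qed

lemma anc_le_step_mono:
  assumes step: "\<And>w. anc_le p w (q w)" and "anc_le q x y"
  shows "anc_le p x y"
proof -
  have "anc_le p x ((q ^^ n) x)" for n
    by (induction n) (auto intro: anc_le_trans step)
  then show ?thesis using assms(2) unfolding anc_le_def[of q] by blast
qed

lemma anc_le_contract_parD: "anc_le (contract_par p v) x y \<Longrightarrow> anc_le p x y"
  by (rule anc_le_step_mono[where q = "contract_par p v"])
    (auto simp: contract_par_def anc_le_parent intro: anc_le_trans[OF anc_le_parent anc_le_parent])

lemma anc_le_contract_par_ne:
  assumes "p v \<noteq> v" "x \<noteq> v" "anc_le (contract_par p v) x y"
  shows "y \<noteq> v"
proof -
  obtain n where n: "(contract_par p v ^^ n) x = y"
    using assms(3) unfolding anc_le_def by blast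
  show ?thesis
  proof (cases n)
    case 0
    then show ?thesis using n assms(2) by simp
  next
    case (Suc m)
    then show ?thesis using n assms(1) by (auto simp: contract_par_def split: if_splits)
  qed
qed

lemma anc_le_contract_parI:
  assumes "p v \<noteq> v"
  shows "x \<noteq> v \<Longrightarrow> (p ^^ n) x = y \<Longrightarrow> y \<noteq> v \<Longrightarrow> anc_le (contract_par p v) x y"
proof (induction n arbitrary: x rule: less_induct)
  case (less n)
  show ?case
  proof (cases n)
    case 0
    then show ?thesis using less.prems by simp
  next
    case (Suc k)
    then have k: "(p ^^ k) (p x) = y"
      using less.prems(2) by (simp add: funpow_swap1)
    show ?thesis
    proof (cases "p x = v")
      case False
      then have "contract_par p v x = p x" by (simp add: contract_par_def)
      moreover have "anc_le (contract_par p v) (p x) y"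
        using Suc False k less.prems(3) by (intro less.IH) auto
      ultimately show ?thesis
        using anc_le_trans[OF anc_le_parent[of "contract_par p v" x]] by simp
    next
      case True
      then obtain k' where k': "k = Suc k'"
        using k less.prems(3) by (cases k) auto
      then have "(p ^^ k') (p v) = y"
        using k True by (simp add: funpow_swap1)
      then have "anc_le (contract_par p v) (p v) y"
        using Suc k' assms less.prems(3) by (intro less.IH) auto
      moreover have "contract_par p v x = p v" using True by (simp add: contract_par_def)
      ultimately show ?thesis
        using anc_le_trans[OF anc_le_parent[of "contract_par p v" x]] by simp
    qed
  qed
qed

lemma anc_le_contract_par_iff:
  assumes "p v \<noteq> v" "x \<noteq> v"
  shows "anc_le (contract_par p v) x y \<longleftrightarrow> anc_le p x y \<and> y \<noteq> v"
proof
  assume "anc_le (contract_par p v) x y"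
  then show "anc_le p x y \<and> y \<noteq> v"
    using anc_le_contract_parD anc_le_contract_par_ne[of p v x y] assms by simp
next
  assume "anc_le p x y \<and> y \<noteq> v"
  then obtain n where "(p ^^ n) x = y" "y \<noteq> v" unfolding anc_le_def by blast
  then show "anc_le (contract_par p v) x y"
    using anc_le_contract_parI[of p v x n y] assms by simp
qed

locale rooted_tree =
  fixes V :: "'v set" and par :: "'v \<Rightarrow> 'v" and r :: 'v
  assumes root_in: "r \<in> V"
    and par_root: "par r = r"
    and par_closed: "x \<in> V \<Longrightarrow> par x \<in> V"
    and reaches_root: "x \<in> V \<Longrightarrow> anc_le par x r"
begin

lemma anc_le_antisym_on: "a \<in> V \<Longrightarrow> anc_le par a b \<Longrightarrow> anc_le par b a \<Longrightarrow> a = b"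
  using anc_le_antisym[OF par_root reaches_root] .

lemma par_neq_self: "x \<in> V \<Longrightarrow> x \<noteq> r \<Longrightarrow> par x \<noteq> x"
  using reaches_root funpow_fixed[of par x] unfolding anc_le_def by metis

lemma funpow_par_in: "x \<in> V \<Longrightarrow> (par ^^ n) x \<in> V"
  by (induction n) (auto intro: par_closed)

lemma lca_eqI:
  assumes "z \<in> V" "anc_le par x z" "anc_le par y z"
    and "\<And>w. w \<in> V \<Longrightarrow> anc_le par x w \<Longrightarrow> anc_le par y w \<Longrightarrow> anc_le par z w"
  shows "lca V par x y = z"
  unfolding lca_def
proof (rule the_equality)
  fix z' assume "z' \<in> V \<and> anc_le par x z' \<and> anc_le par y z' \<and>
      (\<forall>w\<in>V. anc_le par x w \<and> anc_le par y w \<longrightarrow> anc_le par z' w)"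
  then show "z' = z" using assms by (blast intro: anc_le_antisym_on)
qed (use assms in blast)

text \<open>The lca of x and y is the first vertex on the path from x to the root that lies above y.\<close>
lemma lca_exists:
  assumes "x \<in> V" "y \<in> V"
  obtains z where "z \<in> V" "anc_le par x z" "anc_le par y z"
    "\<And>w. w \<in> V \<Longrightarrow> anc_le par x w \<Longrightarrow> anc_le par y w \<Longrightarrow> anc_le par z w"
proof -
  obtain n where n: "(par ^^ n) x = r" using reaches_root[OF assms(1)] unfolding anc_le_def by blast
  define i where "i = (LEAST i. anc_le par y ((par ^^ i) x))"
  have "anc_le par y ((par ^^ i) x)"
    unfolding i_def using n reaches_root[OF assms(2)] by (metis LeastI)
  moreover have "anc_le par ((par ^^ i) x) w"
    if xw: "anc_le par x w" and yw: "anc_le par y w" for w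
  proof -
    obtain j where j: "(par ^^ j) x = w" using xw unfolding anc_le_def by blast
    then have "i \<le> j" unfolding i_def using yw by (simp add: Least_le)
    then have "(par ^^ (j - i)) ((par ^^ i) x) = w"
      using j by (metis funpow_add comp_apply le_add_diff_inverse2)
    then show ?thesis unfolding anc_le_def by blast
  qed
  ultimately show ?thesis
    using that funpow_par_in[OF assms(1)] unfolding anc_le_def[of par x] by blast
qed

lemma
  assumes "x \<in> V" "y \<in> V"
  shows lca_in: "lca V par x y \<in> V"
    and lca_upper1: "anc_le par x (lca V par x y)"
    and lca_upper2: "anc_le par y (lca V par x y)"
    and lca_least: "\<lbrakk>w \<in> V; anc_le par x w; anc_le par y w\<rbrakk> \<Longrightarrow> anc_le par (lca V par x y) w"
proof -
  obtain z where z: "z \<in> V" "anc_le par x z" "anc_le par y z"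
    "\<And>w. w \<in> V \<Longrightarrow> anc_le par x w \<Longrightarrow> anc_le par y w \<Longrightarrow> anc_le par z w"
    using lca_exists[OF assms] by blast
  with lca_eqI have "lca V par x y = z" by blast
  with z show "lca V par x y \<in> V" "anc_le par x (lca V par x y)" "anc_le par y (lca V par x y)"
    "\<lbrakk>w \<in> V; anc_le par x w; anc_le par y w\<rbrakk> \<Longrightarrow> anc_le par (lca V par x y) w"
    by simp_all
qed

end

lemma planted_phylo_rooted_tree: "planted_phylo V par r \<Longrightarrow> rooted_tree V par r"
  unfolding planted_phylo_def rooted_tree_def anc_le_def by (metis DiffI singletonD)

definition contract_map :: "('v \<Rightarrow> 'v) \<Rightarrow> 'v \<Rightarrow> 'v \<Rightarrow> 'v" where
  "contract_map p v a = (if a = v then p v else a)"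

lemma contract_map_neq: "p v \<noteq> v \<Longrightarrow> contract_map p v a \<noteq> v"
  by (simp add: contract_map_def)

lemma anc_le_contract_map: "anc_le p a (contract_map p v a)"
  by (simp add: contract_map_def anc_le_parent)

lemma contract_map_anc_le_iff:
  assumes "w \<noteq> v"
  shows "anc_le p (contract_map p v a) w \<longleftrightarrow> anc_le p a w"
proof (cases "a = v")
  case True
  then show ?thesis
    using assms anc_le_cases[of p v w] anc_le_trans[OF anc_le_parent[of p v]]
    by (auto simp: contract_map_def)
qed (simp add: contract_map_def)

context rooted_tree
begin

lemma rooted_tree_contract:
  assumes "v \<in> V" "v \<noteq> r"
  shows "rooted_tree (contract_vertices V v) (contract_par par v) r"
proof
  have pv: "par v \<noteq> v" "par v \<in> V"
    using assms par_neq_self par_closed by auto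
  show "r \<in> contract_vertices V v"
    using assms root_in by (simp add: contract_vertices_def)
  show "contract_par par v r = r"
    using assms par_root by (simp add: contract_par_def)
  show "contract_par par v x \<in> contract_vertices V v" if "x \<in> contract_vertices V v" for x
    using that pv par_closed by (auto simp: contract_par_def contract_vertices_def)
  show "anc_le (contract_par par v) x r" if "x \<in> contract_vertices V v" for x
    using that pv assms reaches_root anc_le_contract_par_iff[of par v x r]
    by (simp add: contract_vertices_def)
qed

lemma anc_le_contract_map_iff:
  assumes "v \<in> V" "v \<noteq> r" "anc_le par x a" "anc_le par x b"
  shows "anc_le par (contract_map par v a) (contract_map par v b)
           \<longleftrightarrow> anc_le par a b \<or> (a = par v \<and> b = v)"
proof (cases "b = v")
  case True
  have "anc_le par a (par v) \<longleftrightarrow> anc_le par a v \<or> a = par v"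
  proof
    assume au: "anc_le par a (par v)"
    have "a = par v" if "\<not> anc_le par a v"
    proof -
      \<comment> \<open>a and v both lie above x, so a lies strictly above v, hence above par v\<close>
      have "anc_le par v a" "a \<noteq> v"
        using that anc_le_total[OF assms(3,4)] True by auto
      then have "anc_le par (par v) a"
        using anc_le_cases[of par v a] by simp
      then show "a = par v"
        using anc_le_antisym_on[OF par_closed[OF assms(1)] _ au] by simp
    qed
    then show "anc_le par a v \<or> a = par v" by blast
  next
    show "anc_le par a (par v)" if "anc_le par a v \<or> a = par v"
      using that anc_le_trans[OF _ anc_le_parent[of par v]] by auto
  qed
  with True show ?thesis
    using par_neq_self[OF assms(1,2)] by (simp add: contract_map_def)
next
  case False
  then show ?thesis
    using contract_map_anc_le_iff[OF False] by (simp add: contract_map_def)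
qed

lemma lca_contract:
  assumes "v \<in> V" "v \<noteq> r" "x \<in> V" "x \<noteq> v" "y \<in> V" "y \<noteq> v"
  shows "lca (contract_vertices V v) (contract_par par v) x y = contract_map par v (lca V par x y)"
proof -
  interpret contracted: rooted_tree "contract_vertices V v" "contract_par par v" r
    using assms(1,2) by (rule rooted_tree_contract)
  have pv: "par v \<noteq> v" using assms(1,2) by (rule par_neq_self)
  have anc_iff: "anc_le (contract_par par v) a b \<longleftrightarrow> anc_le par a b \<and> b \<noteq> v" if "a \<noteq> v" for a b
    using anc_le_contract_par_iff[of par v a b] pv that by simp
  let ?z = "contract_map par v (lca V par x y)"
  show ?thesis
  proof (rule contracted.lca_eqI)
    have "lca V par x y \<in> V" using lca_in[OF assms(3,5)] .
    then show "?z \<in> contract_vertices V v"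
      using pv par_closed[OF assms(1)] by (simp add: contract_vertices_def contract_map_def)
    have "anc_le par x ?z" "anc_le par y ?z"
      using anc_le_trans[OF lca_upper1[OF assms(3,5)] anc_le_contract_map]
        anc_le_trans[OF lca_upper2[OF assms(3,5)] anc_le_contract_map] .
    then show "anc_le (contract_par par v) x ?z" "anc_le (contract_par par v) y ?z"
      using anc_iff assms(4,6) contract_map_neq[of par v] pv by simp_all
    fix w
    assume w: "w \<in> contract_vertices V v" "anc_le (contract_par par v) x w"
      "anc_le (contract_par par v) y w"
    then have "w \<in> V" "w \<noteq> v" "anc_le par x w" "anc_le par y w"
      using anc_iff assms(4,6) by (auto simp: contract_vertices_def)
    then have "anc_le par ?z w"
      using lca_least[OF assms(3,5)] contract_map_anc_le_iff[of w v par] by simp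
    then show "anc_le (contract_par par v) ?z w"
      using anc_iff \<open>w \<noteq> v\<close> contract_map_neq[of par v] pv by simp
  qed
qed

lemma leaves_contract:
  assumes "v \<in> V" "v \<noteq> r" "children V par r v \<noteq> {}"
  shows "leaves (contract_vertices V v) (contract_par par v) r = leaves V par r"
proof -
  have pv: "par v \<noteq> v" using assms(1,2) by (rule par_neq_self)
  have children_empty_iff: "children (contract_vertices V v) (contract_par par v) r x = {}
          \<longleftrightarrow> children V par r x = {}" if "x \<noteq> v" for x
  proof (cases "x = par v")
    case True
    \<comment> \<open>par v loses its child v but inherits the children of v\<close>
    obtain w where "w \<in> V" "w \<noteq> r" "par w = v"
      using assms(3) unfolding children_def by blast
    then have "w \<in> children (contract_vertices V v) (contract_par par v) r x"
      using True pv by (auto simp: children_def contract_vertices_def contract_par_def)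
    moreover have "v \<in> children V par r x"
      using True assms(1,2) by (simp add: children_def)
    ultimately show ?thesis by blast
  next
    case False
    then have "children (contract_vertices V v) (contract_par par v) r x = children V par r x"
      using that by (auto simp: children_def contract_vertices_def contract_par_def)
    then show ?thesis by simp
  qed
  moreover have "v \<notin> leaves V par r"
    using assms(3) by (simp add: leaves_def)
  ultimately have "x \<in> leaves (contract_vertices V v) (contract_par par v) r
      \<longleftrightarrow> x \<in> leaves V par r" for x
    by (cases "x = v") (simp_all add: leaves_def contract_vertices_def)
  then show ?thesis by blast
qed

lemma lca_edge_subtree_leaves:
  assumes "v \<in> V" "v \<noteq> r" and leaves: "x \<in> leaves V par r" "y \<in> leaves V par r" "y' \<in> leaves V par r"
    and lca: "lca V par x y = par v" "lca V par x y' = v"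
  shows "y' \<in> subtree_leaves V par r v"
    and "y \<in> subtree_leaves V par r (par v) - subtree_leaves V par r v"
proof -
  have V: "x \<in> V" "y \<in> V" "y' \<in> V" using leaves by (auto simp: leaves_def)
  show "y' \<in> subtree_leaves V par r v"
    using leaves(3) lca_upper2[OF V(1,3)] lca(2) by (simp add: subtree_leaves_def)
  have "\<not> anc_le par y v"
  proof
    assume "anc_le par y v"
    then have "anc_le par (par v) v"
      using lca_least[OF V(1,2) assms(1)] lca_upper1[OF V(1,3)] lca by simp
    then show False
      using anc_le_antisym_on[OF par_closed[OF assms(1)] _ anc_le_parent]
        par_neq_self[OF assms(1,2)] by blast
  qed
  then show "y \<in> subtree_leaves V par r (par v) - subtree_leaves V par r v"
    using leaves(2) lca_upper2[OF V(1,2)] lca(1) by (simp add: subtree_leaves_def)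
qed

lemma best_match_contract:
  assumes "v \<in> V" "v \<noteq> r" "children V par r v \<noteq> {}"
    and disjoint: "\<sigma> ` subtree_leaves V par r v \<inter>
        \<sigma> ` (subtree_leaves V par r (par v) - subtree_leaves V par r v) = {}"
  shows "best_match (contract_vertices V v) (contract_par par v) r \<sigma> = best_match V par r \<sigma>"
proof -
  have pv: "par v \<noteq> v" using assms(1,2) by (rule par_neq_self)
  have leaf: "x \<in> V" "x \<noteq> v" if "x \<in> leaves V par r" for x
    using that assms(3) by (auto simp: leaves_def)
  have "anc_le (contract_par par v) (lca (contract_vertices V v) (contract_par par v) x y)
          (lca (contract_vertices V v) (contract_par par v) x y')
        \<longleftrightarrow> anc_le par (lca V par x y) (lca V par x y')"
    if leaves: "x \<in> leaves V par r" "y \<in> leaves V par r" "y' \<in> leaves V par r"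
      and same_colour: "\<sigma> y' = \<sigma> y" for x y y'
  proof -
    \<comment> \<open>the only comparison the contraction can create is lca x y = par v, lca x y' = v,
      which would put the colour of y' on both sides of the edge\<close>
    have no_new: "\<not> (lca V par x y = par v \<and> lca V par x y' = v)"
      using lca_edge_subtree_leaves[OF assms(1,2) leaves] disjoint same_colour by blast
    have "anc_le par x (lca V par x y)" "anc_le par x (lca V par x y')"
      using lca_upper1 leaf leaves by auto
    then show ?thesis
      using lca_contract[OF assms(1,2)] leaf[OF leaves(1)] leaf[OF leaves(2)] leaf[OF leaves(3)]
        anc_le_contract_par_iff[of par v] pv contract_map_neq[of par v]
        anc_le_contract_map_iff[OF assms(1,2)] no_new
      by (simp; blast)
  qed
  then show ?thesis
    unfolding best_match_def leaves_contract[OF assms(1-3)] by (intro ext) blast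
qed

lemma rbmg_contract:
  assumes "v \<in> V" "v \<noteq> r" "children V par r v \<noteq> {}"
    and "\<sigma> ` subtree_leaves V par r v \<inter>
        \<sigma> ` (subtree_leaves V par r (par v) - subtree_leaves V par r v) = {}"
  shows "rbmg (contract_vertices V v) (contract_par par v) r \<sigma> = rbmg V par r \<sigma>"
  unfolding rbmg_def best_match_contract[OF assms] ..

end

theorem mainTheorem10:
  fixes V :: "'v set" and par :: "'v \<Rightarrow> 'v" and r :: 'v
    and \<sigma> :: "'v \<Rightarrow> 'c" and G :: "'v set set"
  assumes "planted_phylo V par r"
    and "G = rbmg V par r \<sigma>"
    and "least_resolved V par r \<sigma>"
    and "inner_edge V par r u v"
  shows "\<sigma> ` subtree_leaves V par r v \<inter>
           \<sigma> ` (subtree_leaves V par r u - subtree_leaves V par r v) \<noteq> {}"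
proof
  assume disjoint: "\<sigma> ` subtree_leaves V par r v \<inter>
      \<sigma> ` (subtree_leaves V par r u - subtree_leaves V par r v) = {}"
  interpret rooted_tree V par r
    using assms(1) by (rule planted_phylo_rooted_tree)
  have "v \<in> V" "v \<noteq> r" "par v = u" "children V par r v \<noteq> {}"
    using assms(4) by (auto simp: inner_edge_def inner_vertices_def leaves_def)
  then have "rbmg (contract_vertices V v) (contract_par par v) r \<sigma> = rbmg V par r \<sigma>"
    using disjoint by (intro rbmg_contract) simp_all
  with assms(3,4) show False
    unfolding least_resolved_def by blast
qed

end
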